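(* Fix $\beta>0$ and a transient MDP with a sink state as in the context. For each stationary policy $\pi=(\bm d)_\infty\in\Pi_{\mathrm{SR}}$ and each $\bm z\in\mathbb R^S$ with $\bm z\ge\bm 0$: \[ \bm w^\infty(\pi,\bm z)>-\bm\infty\quad\Longrightarrow\quad\rho(\bm B^{\bm d})<1, \] where $\rho$ denotes the spectral radius.
   Context: MDP: states $\bar{\mathcal S}=\{1,\dots,S,S+1\}$, $e:=S+1$ a sink state, $\mathcal S=\{1,\dots,S\}$; finite actions $\mathcal A$; transitions $p(s,a,s')$, real rewards $r(s,a,s')$ of arbitrary sign; $p(e,a,e)=1$, $r(e,a,e)=0$. Transience (standing assumption): for every stationary deterministic policy $\pi$, $\sum_{t\ge0}\mathbb P^{\pi,s}[\tilde s_t=s']<\infty$ for all $s,s'\in\mathcal S$. A decision rule $\bm d$ assigns to each $s\in\mathcal S$ a distribution $(d_a(s))_a$ over actions; $\Pi_{\mathrm{SR}}$ is the set of stationary randomized policies $(\bm d)_\infty$. Define $B^{\bm d}_{s,s'}=\sum_a p(s,a,s')d_a(s)e^{-\beta r(s,a,s')}$ and $b^{\bm d}_s=\sum_a p(s,a,e)d_a(s)e^{-\beta r(s,a,e)}$ for $s,s'\in\mathcal S$. For $t\in\mathbb N$ and $\bm z\in\mathbb R^S$: $\bm w^t(\pi,\bm z)=-(\bm B^{\bm d})^t\bm z-\sum_{k=0}^{t-1}(\bm B^{\bm d})^k\bm b^{\bm d}$, and $\bm w^\infty(\pi,\bm z)=\liminf_{t\to\infty}\bm w^t(\pi,\bm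 z)$ componentwise; $>-\bm\infty$ means every component is finite. *)

theory Defs
  imports "Jordan_Normal_Form.Spectral_Radius" "HOL-Library.Extended_Real"
begin

text \<open>States are 0..S-1 (the paper's 1..S) and S (the sink e = S+1).
  Actions form a finite nonempty set A. p s a s' are transition probabilities,
  r s a s' real rewards.\<close>

definition mdp :: "nat \<Rightarrow> 'a set \<Rightarrow> (nat \<Rightarrow> 'a \<Rightarrow> nat \<Rightarrow> real)
    \<Rightarrow> (nat \<Rightarrow> 'a \<Rightarrow> nat \<Rightarrow> real) \<Rightarrow> bool" where
  "mdp S A p r \<longleftrightarrow> finite A \<and> A \<noteq> {} \<and>
     (\<forall>s\<le>S. \<forall>a\<in>A. (\<forall>s'\<le>S. 0 \<le> p s a s') \<and> (\<Sum>s'\<le>S. p s a s') = 1) \<and>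
     (\<forall>a\<in>A. p S a S = 1 \<and> r S a S = 0)"

definition P_det :: "nat \<Rightarrow> (nat \<Rightarrow> 'a \<Rightarrow> nat \<Rightarrow> real) \<Rightarrow> (nat \<Rightarrow> 'a) \<Rightarrow> real mat" where
  "P_det S p \<sigma> = mat (S+1) (S+1) (\<lambda>(s,s'). p s (\<sigma> s) s')"

text \<open>Transience: for every stationary deterministic policy, the expected number of
  visits P^{pi,s}[s_t = s'] = (P^t)_{s s'} summed over t is finite.\<close>
definition transient :: "nat \<Rightarrow> 'a set \<Rightarrow> (nat \<Rightarrow> 'a \<Rightarrow> nat \<Rightarrow> real) \<Rightarrow> bool" where
  "transient S A p \<longleftrightarrow> (\<forall>\<sigma>. (\<forall>s\<le>S. \<sigma> s \<in> A) \<longrightarrow>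
     (\<forall>s<S. \<forall>s'<S. summable (\<lambda>t. (P_det S p \<sigma> ^\<^sub>m t) $$ (s,s'))))"

definition decision_rule :: "nat \<Rightarrow> 'a set \<Rightarrow> (nat \<Rightarrow> 'a \<Rightarrow> real) \<Rightarrow> bool" where
  "decision_rule S A d \<longleftrightarrow> (\<forall>s<S. (\<forall>a\<in>A. 0 \<le> d s a) \<and> (\<Sum>a\<in>A. d s a) = 1)"

definition Bmat :: "nat \<Rightarrow> 'a set \<Rightarrow> (nat \<Rightarrow> 'a \<Rightarrow> nat \<Rightarrow> real) \<Rightarrow> (nat \<Rightarrow> 'a \<Rightarrow> nat \<Rightarrow> real)
    \<Rightarrow> real \<Rightarrow> (nat \<Rightarrow> 'a \<Rightarrow> real) \<Rightarrow> real mat" where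
  "Bmat S A p r \<beta> d = mat S S (\<lambda>(s,s'). \<Sum>a\<in>A. p s a s' * d s a * exp (- \<beta> * r s a s'))"

definition bvec :: "nat \<Rightarrow> 'a set \<Rightarrow> (nat \<Rightarrow> 'a \<Rightarrow> nat \<Rightarrow> real) \<Rightarrow> (nat \<Rightarrow> 'a \<Rightarrow> nat \<Rightarrow> real)
    \<Rightarrow> real \<Rightarrow> (nat \<Rightarrow> 'a \<Rightarrow> real) \<Rightarrow> real vec" where
  "bvec S A p r \<beta> d = vec S (\<lambda>s. \<Sum>a\<in>A. p s a S * d s a * exp (- \<beta> * r s a S))"

definition wt :: "nat \<Rightarrow> 'a set \<Rightarrow> (nat \<Rightarrow> 'a \<Rightarrow> nat \<Rightarrow> real) \<Rightarrow> (nat \<Rightarrow> 'a \<Rightarrow> nat \<Rightarrow> real)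
    \<Rightarrow> real \<Rightarrow> (nat \<Rightarrow> 'a \<Rightarrow> real) \<Rightarrow> real vec \<Rightarrow> nat \<Rightarrow> real vec" where
  "wt S A p r \<beta> d z t =
     vec S (\<lambda>i. - ((Bmat S A p r \<beta> d ^\<^sub>m t) *\<^sub>v z) $ i
                 - (\<Sum>k<t. ((Bmat S A p r \<beta> d ^\<^sub>m k) *\<^sub>v bvec S A p r \<beta> d) $ i))"

definition winf :: "nat \<Rightarrow> 'a set \<Rightarrow> (nat \<Rightarrow> 'a \<Rightarrow> nat \<Rightarrow> real) \<Rightarrow> (nat \<Rightarrow> 'a \<Rightarrow> nat \<Rightarrow> real)
    \<Rightarrow> real \<Rightarrow> (nat \<Rightarrow> 'a \<Rightarrow> real) \<Rightarrow> real vec \<Rightarrow> nat \<Rightarrow> ereal" where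
  "winf S A p r \<beta> d z i = liminf (\<lambda>t. ereal (wt S A p r \<beta> d z t $ i))"

end

theory Submission
  imports Defs
begin

(* Since B, b and z are nonnegative, w^t <= - sum_{k<t} B^k b, so a finite w^infinity forces
   the series g = sum_k B^k b to converge, and then g = b + B g. If rho(B) >= 1, the moduli y
   of an eigenvector for an eigenvalue of maximal modulus satisfy y <= B y. Comparing y with g
   (through the zero set of g, or the set where y/g is maximal) yields a nonempty set C of
   states that neither B nor b leads out of. Every action that d plays at a state of C then
   stays in C, so a deterministic policy using only such actions is trapped in C forever,
   contradicting transience. *)

lemma mult_mat_vec_index_sum:
  assumes "A \<in> carrier_mat n n" "v \<in> carrier_vec n" "i < n"
  shows "(A *\<^sub>v v) $ i = (\<Sum>j<n. A $$ (i,j) * v $ j)"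
  using assms by (auto simp: scalar_prod_def lessThan_atLeast0 intro!: sum.cong)

lemma mult_mat_index_sum:
  assumes "A \<in> carrier_mat n n" "B \<in> carrier_mat n n" "i < n" "j < n"
  shows "(A * B) $$ (i,j) = (\<Sum>k<n. A $$ (i,k) * B $$ (k,j))"
  using assms by (auto simp: scalar_prod_def lessThan_atLeast0 intro!: sum.cong)

lemma pow_mat_Suc_left:
  assumes "A \<in> carrier_mat n n"
  shows "A ^\<^sub>m Suc k = A * A ^\<^sub>m k"
proof (induction k)
  case 0
  then show ?case using assms by simp
next
  case (Suc k)
  have "A ^\<^sub>m Suc (Suc k) = (A * A ^\<^sub>m k) * A" using Suc by simp
  also have "\<dots> = A * (A ^\<^sub>m k * A)"
    using assms by (simp add: assoc_mult_mat[of _ n n _ n _ n])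
  finally show ?case by simp
qed

lemma pow_mat_mult_vec_Suc_index:
  assumes A: "A \<in> carrier_mat n n" and v: "v \<in> carrier_vec n" and "i < n"
  shows "(A ^\<^sub>m Suc k *\<^sub>v v) $ i = (\<Sum>j<n. A $$ (i,j) * (A ^\<^sub>m k *\<^sub>v v) $ j)"
proof -
  have "A ^\<^sub>m Suc k *\<^sub>v v = A *\<^sub>v (A ^\<^sub>m k *\<^sub>v v)"
    unfolding pow_mat_Suc_left[OF A] using A v by (simp add: assoc_mult_mat_vec[of _ n n _ n])
  then show ?thesis
    using assms mult_mat_vec_index_sum[OF A mult_mat_vec_carrier[OF pow_carrier_mat[OF A] v]]
    by simp
qed

lemma pow_mat_mult_vec_nonneg:
  fixes A :: "real mat"
  assumes A: "A \<in> carrier_mat n n" and A_nonneg: "\<forall>i<n. \<forall>j<n. 0 \<le> A $$ (i,j)"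
    and v: "v \<in> carrier_vec n" and v_nonneg: "\<forall>j<n. 0 \<le> v $ j" and "i < n"
  shows "0 \<le> (A ^\<^sub>m k *\<^sub>v v) $ i"
  using \<open>i < n\<close>
proof (induction k arbitrary: i)
  case 0
  then show ?case using A v v_nonneg by simp
next
  case (Suc k)
  then show ?case
    using A_nonneg unfolding pow_mat_mult_vec_Suc_index[OF A v Suc.prems]
    by (auto intro!: sum_nonneg)
qed

lemma pow_mat_row_sum_closed:
  fixes P :: "real mat"
  assumes P: "P \<in> carrier_mat n n" and "C \<subseteq> {..<n}"
    and stays: "\<forall>s\<in>C. \<forall>k<n. k \<notin> C \<longrightarrow> P $$ (s,k) = 0"
    and rows: "\<forall>s\<in>C. (\<Sum>j\<in>C. P $$ (s,j)) = 1"
    and "s \<in> C"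
  shows "(\<Sum>j\<in>C. (P ^\<^sub>m t) $$ (s,j)) = 1"
  using \<open>s \<in> C\<close>
proof (induction t arbitrary: s)
  case 0
  have "finite C"
    using \<open>C \<subseteq> {..<n}\<close> finite_subset by blast
  moreover have "(P ^\<^sub>m 0) $$ (s,j) = (if s = j then 1 else 0)" if "j \<in> C" for j
  proof -
    have "s < n" "j < n"
      using that 0 \<open>C \<subseteq> {..<n}\<close> by auto
    with P show ?thesis
      by simp
  qed
  ultimately show ?case
    using 0 by simp
next
  case (Suc t)
  have s: "s < n"
    using Suc.prems \<open>C \<subseteq> {..<n}\<close> by auto
  have "(P ^\<^sub>m Suc t) $$ (s,j) = (\<Sum>k<n. P $$ (s,k) * (P ^\<^sub>m t) $$ (k,j))" if "j \<in> C" for j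
    unfolding pow_mat_Suc_left[OF P]
    using mult_mat_index_sum[OF P pow_carrier_mat[OF P] s] that \<open>C \<subseteq> {..<n}\<close> by auto
  then have "(\<Sum>j\<in>C. (P ^\<^sub>m Suc t) $$ (s,j)) = (\<Sum>j\<in>C. \<Sum>k<n. P $$ (s,k) * (P ^\<^sub>m t) $$ (k,j))"
    by simp
  also have "\<dots> = (\<Sum>k<n. P $$ (s,k) * (\<Sum>j\<in>C. (P ^\<^sub>m t) $$ (k,j)))"
    by (simp add: sum_distrib_left sum.swap[of _ C])
  also have "\<dots> = (\<Sum>k\<in>C. P $$ (s,k))"
  proof -
    have "(\<Sum>k<n. P $$ (s,k) * (\<Sum>j\<in>C. (P ^\<^sub>m t) $$ (k,j))) = (\<Sum>k\<in>C. P $$ (s,k) * (\<Sum>j\<in>C. (P ^\<^sub>m t) $$ (k,j)))"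
      using stays Suc.prems \<open>C \<subseteq> {..<n}\<close> by (intro sum.mono_neutral_right) auto
    then show ?thesis
      using Suc.IH by simp
  qed
  finally show ?case
    using rows Suc.prems by simp
qed

lemma summable_if_liminf_neq_MInfty:
  fixes f u :: "nat \<Rightarrow> real"
  assumes f_nonneg: "\<And>k. 0 \<le> f k" and u_nonneg: "\<And>t. 0 \<le> u t"
    and liminf: "liminf (\<lambda>t. ereal (- u t - (\<Sum>k<t. f k))) \<noteq> -\<infinity>"
  shows "summable f"
proof -
  obtain R :: real where "ereal R < liminf (\<lambda>t. ereal (- u t - (\<Sum>k<t. f k)))"
    using liminf ereal_dense2[of "-\<infinity>"] by force
  then have "eventually (\<lambda>t. R < - u t - (\<Sum>k<t. f k)) sequentially"
    by (auto dest: less_LiminfD)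
  then obtain N where N: "\<And>t. N \<le> t \<Longrightarrow> R < - u t - (\<Sum>k<t. f k)"
    by (auto simp: eventually_sequentially)
  have "(\<Sum>k<t. f k) \<le> - R" for t
  proof -
    have "(\<Sum>k<t. f k) \<le> (\<Sum>k<max t N. f k)"
      using f_nonneg by (intro sum_mono2) auto
    also have "\<dots> \<le> - R"
      using N[of "max t N"] u_nonneg[of "max t N"] by simp
    finally show ?thesis .
  qed
  with f_nonneg show ?thesis
    by (rule summableI_nonneg_bounded)
qed

lemma pow_mat_series_fixpoint:
  fixes A :: "real mat"
  assumes A: "A \<in> carrier_mat n n" and b: "b \<in> carrier_vec n"
    and summable: "\<forall>j<n. summable (\<lambda>k. (A ^\<^sub>m k *\<^sub>v b) $ j)" and i: "i < n"
  shows "(\<Sum>k. (A ^\<^sub>m k *\<^sub>v b) $ i) = b $ i + (\<Sum>j<n. A $$ (i,j) * (\<Sum>k. (A ^\<^sub>m k *\<^sub>v b) $ j))"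
proof -
  have "(\<Sum>k. (A ^\<^sub>m k *\<^sub>v b) $ i) = (\<Sum>k. (A ^\<^sub>m Suc k *\<^sub>v b) $ i) + (A ^\<^sub>m 0 *\<^sub>v b) $ i"
    using suminf_split_head[of "\<lambda>k. (A ^\<^sub>m k *\<^sub>v b) $ i"] summable i by simp
  also have "(\<Sum>k. (A ^\<^sub>m Suc k *\<^sub>v b) $ i) = (\<Sum>k. \<Sum>j<n. A $$ (i,j) * (A ^\<^sub>m k *\<^sub>v b) $ j)"
    unfolding pow_mat_mult_vec_Suc_index[OF A b i] ..
  also have "\<dots> = (\<Sum>j<n. \<Sum>k. A $$ (i,j) * (A ^\<^sub>m k *\<^sub>v b) $ j)"
    using summable by (intro suminf_sum) (auto intro!: summable_mult)
  also have "\<dots> = (\<Sum>j<n. A $$ (i,j) * (\<Sum>k. (A ^\<^sub>m k *\<^sub>v b) $ j))"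
    using summable by (intro sum.cong refl suminf_mult) auto
  finally show ?thesis
    using A b i by simp
qed

lemma subinvariant_vector_if_spectral_radius_ge_1:
  fixes A :: "real mat"
  assumes A: "A \<in> carrier_mat n n" and "0 < n"
    and A_nonneg: "\<forall>i<n. \<forall>j<n. 0 \<le> A $$ (i,j)"
    and radius: "1 \<le> spectral_radius (map_mat complex_of_real A)"
  obtains y j\<^sub>0 where "j\<^sub>0 < n" "0 < y j\<^sub>0"
    "\<forall>i<n. y i \<le> (\<Sum>j<n. A $$ (i,j) * y j)"
proof -
  let ?Ac = "map_mat complex_of_real A"
  have Ac: "?Ac \<in> carrier_mat n n"
    using A by simp
  obtain \<mu> where "\<mu> \<in> spectrum ?Ac" "1 \<le> cmod \<mu>"
    using spectral_radius_mem_max(1)[OF Ac \<open>0 < n\<close>] radius by auto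
  then obtain v where v: "v \<in> carrier_vec n" "v \<noteq> 0\<^sub>v n" "?Ac *\<^sub>v v = \<mu> \<cdot>\<^sub>v v"
    using Ac by (auto simp: spectrum_def eigenvalue_def eigenvector_def)
  obtain j\<^sub>0 where j\<^sub>0: "j\<^sub>0 < n" "v $ j\<^sub>0 \<noteq> 0"
    using v(1,2) by (metis eq_vecI index_zero_vec(1,2) carrier_vecD)
  have "cmod (v $ i) \<le> (\<Sum>j<n. A $$ (i,j) * cmod (v $ j))" if "i < n" for i
  proof -
    have "cmod (v $ i) \<le> cmod \<mu> * cmod (v $ i)"
      using \<open>1 \<le> cmod \<mu>\<close> by (simp add: mult_le_cancel_right1)
    also have "\<dots> = cmod ((?Ac *\<^sub>v v) $ i)"
      using v(1,3) that by (simp add: norm_mult)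
    also have "\<dots> = cmod (\<Sum>j<n. complex_of_real (A $$ (i,j)) * v $ j)"
      using mult_mat_vec_index_sum[OF Ac v(1) that] A that by simp
    also have "\<dots> \<le> (\<Sum>j<n. cmod (complex_of_real (A $$ (i,j)) * v $ j))"
      by (rule norm_sum)
    also have "\<dots> = (\<Sum>j<n. A $$ (i,j) * cmod (v $ j))"
      using A_nonneg that by (intro sum.cong) (auto simp: norm_mult)
    finally show ?thesis .
  qed
  then show ?thesis
    using that[of j\<^sub>0 "\<lambda>j. cmod (v $ j)"] j\<^sub>0 by simp
qed

definition closed_class :: "nat \<Rightarrow> real mat \<Rightarrow> real vec \<Rightarrow> nat set \<Rightarrow> bool" where
  "closed_class n A b C \<longleftrightarrow> C \<noteq> {} \<and> C \<subseteq> {..<n} \<and>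
     (\<forall>s\<in>C. b $ s = 0 \<and> (\<forall>j<n. j \<notin> C \<longrightarrow> A $$ (s,j) = 0))"

lemma zero_set_closed_class:
  fixes A :: "real mat" and b :: "real vec" and h :: "nat \<Rightarrow> real"
  assumes A_nonneg: "\<forall>i<n. \<forall>j<n. 0 \<le> A $$ (i,j)" and b_nonneg: "\<forall>i<n. 0 \<le> b $ i"
    and h_nonneg: "\<forall>j<n. 0 \<le> h j" and "0 < \<kappa>"
    and excessive: "\<forall>i<n. \<kappa> * b $ i + (\<Sum>j<n. A $$ (i,j) * h j) \<le> h i"
    and zero: "s < n" "h s = 0"
  shows "closed_class n A b {j. j < n \<and> h j = 0}"
proof -
  have "b $ i = 0 \<and> (\<forall>j<n. h j \<noteq> 0 \<longrightarrow> A $$ (i,j) = 0)" if i: "i < n" "h i = 0" for i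
  proof -
    have terms_nonneg: "\<forall>j\<in>{..<n}. 0 \<le> A $$ (i,j) * h j"
      using A_nonneg h_nonneg i by simp
    then have "0 \<le> (\<Sum>j<n. A $$ (i,j) * h j)"
      by (intro sum_nonneg) blast
    moreover have "0 \<le> \<kappa> * b $ i"
      using \<open>0 < \<kappa>\<close> b_nonneg i by simp
    moreover have "\<kappa> * b $ i + (\<Sum>j<n. A $$ (i,j) * h j) \<le> 0"
      using excessive[rule_format, OF i(1)] i(2) by simp
    ultimately have "\<kappa> * b $ i = 0" and sum_zero: "(\<Sum>j<n. A $$ (i,j) * h j) = 0"
      by linarith+
    have "\<forall>j\<in>{..<n}. A $$ (i,j) * h j = 0"
      using sum_nonneg_eq_0_iff[of "{..<n}" "\<lambda>j. A $$ (i,j) * h j"] terms_nonneg sum_zero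
      by simp
    with \<open>\<kappa> * b $ i = 0\<close> \<open>0 < \<kappa>\<close> show ?thesis
      by auto
  qed
  with zero show ?thesis
    unfolding closed_class_def by auto
qed

lemma closed_class_exists:
  fixes A :: "real mat" and b :: "real vec" and g y :: "nat \<Rightarrow> real"
  assumes A_nonneg: "\<forall>i<n. \<forall>j<n. 0 \<le> A $$ (i,j)" and b_nonneg: "\<forall>i<n. 0 \<le> b $ i"
    and g_nonneg: "\<forall>j<n. 0 \<le> g j"
    and g_fixpoint: "\<forall>i<n. g i = b $ i + (\<Sum>j<n. A $$ (i,j) * g j)"
    and y_nonzero: "j\<^sub>0 < n" "0 < y j\<^sub>0"
    and y_subinvariant: "\<forall>i<n. y i \<le> (\<Sum>j<n. A $$ (i,j) * y j)"
  shows "\<exists>C. closed_class n A b C"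
proof (cases "\<exists>s<n. g s = 0")
  case True
  then obtain s where "s < n" "g s = 0"
    by blast
  moreover have "\<forall>i<n. 1 * b $ i + (\<Sum>j<n. A $$ (i,j) * g j) \<le> g i"
    by (simp add: g_fixpoint[rule_format, symmetric])
  ultimately have "closed_class n A b {j. j < n \<and> g j = 0}"
    using zero_set_closed_class[of n A b g 1] A_nonneg b_nonneg g_nonneg by simp
  then show ?thesis ..
next
  case False
  have g_pos: "0 < g j" if "j < n" for j
    using that False g_nonneg by (metis less_eq_real_def)
  define c where "c = Max ((\<lambda>j. y j / g j) ` {..<n})"
  have ratio_le: "y j / g j \<le> c" if "j < n" for j
    unfolding c_def using that by (intro Max_ge) auto
  have y_le: "y j \<le> c * g j" if "j < n" for j
    using ratio_le[OF that] g_pos[OF that] by (simp add: pos_divide_le_eq mult.commute)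
  have "c \<in> (\<lambda>j. y j / g j) ` {..<n}"
    unfolding c_def using y_nonzero(1) by (intro Max_in) auto
  then obtain s where s: "s < n" "c = y s / g s"
    by blast
  have "0 < c"
    using ratio_le[OF y_nonzero(1)] y_nonzero(2) g_pos[OF y_nonzero(1)]
    by (meson divide_pos_pos less_le_trans)
  \<comment> \<open>The gap \<open>c g - y\<close> is again excessive, and it vanishes where \<open>y / g\<close> is maximal.\<close>
  have "\<forall>i<n. c * b $ i + (\<Sum>j<n. A $$ (i,j) * (c * g j - y j)) \<le> c * g i - y i"
  proof (intro allI impI)
    fix i assume "i < n"
    have "c * b $ i + (\<Sum>j<n. A $$ (i,j) * (c * g j - y j))
        = c * (b $ i + (\<Sum>j<n. A $$ (i,j) * g j)) - (\<Sum>j<n. A $$ (i,j) * y j)"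
      by (simp add: algebra_simps sum_subtractf sum_distrib_left)
    also have "\<dots> \<le> c * g i - y i"
      using g_fixpoint[rule_format, OF \<open>i < n\<close>] y_subinvariant[rule_format, OF \<open>i < n\<close>] by simp
    finally show "c * b $ i + (\<Sum>j<n. A $$ (i,j) * (c * g j - y j)) \<le> c * g i - y i" .
  qed
  moreover have "\<forall>j<n. 0 \<le> c * g j - y j"
    using y_le by simp
  moreover have "c * g s - y s = 0"
    using s g_pos[OF s(1)] by simp
  ultimately have "closed_class n A b {j. j < n \<and> c * g j - y j = 0}"
    using zero_set_closed_class[of n A b "\<lambda>j. c * g j - y j" c s] A_nonneg b_nonneg \<open>0 < c\<close> s(1)
    by simp
  then show ?thesis ..
qed

lemma Bmat_nonneg:
  assumes "mdp S A p r" "decision_rule S A d" "i < S" "j < S"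
  shows "0 \<le> Bmat S A p r \<beta> d $$ (i,j)"
  using assms by (auto simp: Bmat_def mdp_def decision_rule_def intro!: sum_nonneg)

lemma bvec_nonneg:
  assumes "mdp S A p r" "decision_rule S A d" "i < S"
  shows "0 \<le> bvec S A p r \<beta> d $ i"
  using assms by (auto simp: bvec_def mdp_def decision_rule_def intro!: sum_nonneg)

lemma summable_Bmat_series:
  assumes mdp: "mdp S A p r" and dr: "decision_rule S A d"
    and z: "z \<in> carrier_vec S" and z_nonneg: "\<forall>i<S. 0 \<le> z $ i"
    and "i < S" and winf: "winf S A p r \<beta> d z i \<noteq> -\<infinity>"
  shows "summable (\<lambda>k. (Bmat S A p r \<beta> d ^\<^sub>m k *\<^sub>v bvec S A p r \<beta> d) $ i)"
proof -
  let ?B = "Bmat S A p r \<beta> d" and ?b = "bvec S A p r \<beta> d"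
  have B: "?B \<in> carrier_mat S S" and b: "?b \<in> carrier_vec S"
    by (simp_all add: Bmat_def bvec_def)
  have B_nonneg: "\<forall>i<S. \<forall>j<S. 0 \<le> ?B $$ (i,j)" and b_nonneg: "\<forall>i<S. 0 \<le> ?b $ i"
    using Bmat_nonneg[OF mdp dr] bvec_nonneg[OF mdp dr] by simp_all
  from winf \<open>i < S\<close> have "liminf (\<lambda>t. ereal (- (?B ^\<^sub>m t *\<^sub>v z) $ i - (\<Sum>k<t. (?B ^\<^sub>m k *\<^sub>v ?b) $ i))) \<noteq> -\<infinity>"
    by (simp add: winf_def wt_def)
  with pow_mat_mult_vec_nonneg[OF B B_nonneg b b_nonneg \<open>i < S\<close>]
    pow_mat_mult_vec_nonneg[OF B B_nonneg z z_nonneg \<open>i < S\<close>]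
  show ?thesis
    by (rule summable_if_liminf_neq_MInfty)
qed

lemma closed_class_Bmat_no_exit:
  assumes mdp: "mdp S A p r" and dr: "decision_rule S A d"
    and C: "closed_class S (Bmat S A p r \<beta> d) (bvec S A p r \<beta> d) C"
    and "s \<in> C" "a \<in> A" "0 < d s a" "j \<le> S" "j \<notin> C"
  shows "p s a j = 0"
proof -
  have "s < S"
    using C \<open>s \<in> C\<close> by (auto simp: closed_class_def)
  have "(\<Sum>a\<in>A. p s a j * d s a * exp (- \<beta> * r s a j)) = 0"
  proof (cases "j = S")
    case True
    have "bvec S A p r \<beta> d $ s = 0"
      using C \<open>s \<in> C\<close> by (simp add: closed_class_def)
    with True \<open>s < S\<close> show ?thesis
      by (simp add: bvec_def)
  next
    case False
    with \<open>j \<le> S\<close> have "j < S"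
      by simp
    with C \<open>s \<in> C\<close> \<open>j \<notin> C\<close> have "Bmat S A p r \<beta> d $$ (s,j) = 0"
      by (simp add: closed_class_def)
    with \<open>s < S\<close> \<open>j < S\<close> show ?thesis
      by (simp add: Bmat_def)
  qed
  moreover have "finite A"
    using mdp by (simp add: mdp_def)
  moreover have "\<forall>a\<in>A. 0 \<le> p s a j * d s a * exp (- \<beta> * r s a j)"
    using mdp dr \<open>s < S\<close> \<open>j \<le> S\<close> by (auto simp: mdp_def decision_rule_def)
  ultimately have "p s a j * d s a * exp (- \<beta> * r s a j) = 0"
    using \<open>a \<in> A\<close> by (simp add: sum_nonneg_eq_0_iff)
  with \<open>0 < d s a\<close> show ?thesis
    by simp
qed

lemma transient_no_closed_class:
  assumes mdp: "mdp S A p r" and transient: "transient S A p" and dr: "decision_rule S A d"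
  shows "\<not> closed_class S (Bmat S A p r \<beta> d) (bvec S A p r \<beta> d) C"
proof
  assume C: "closed_class S (Bmat S A p r \<beta> d) (bvec S A p r \<beta> d) C"
  then have C_sub: "C \<subseteq> {..<S}" and "C \<noteq> {}"
    by (auto simp: closed_class_def)
  have "\<exists>a\<in>A. s \<in> C \<longrightarrow> 0 < d s a" for s
  proof (cases "s \<in> C")
    case True
    with C_sub dr have "(\<Sum>a\<in>A. d s a) = 1"
      by (auto simp: decision_rule_def)
    then have "\<not> (\<forall>a\<in>A. d s a \<le> 0)"
      using sum_nonpos[of A "d s"] by auto
    then show ?thesis
      by (auto simp: not_le)
  next
    case False
    then show ?thesis
      using mdp by (auto simp: mdp_def)
  qed
  then obtain \<sigma> where \<sigma>: "\<And>s. \<sigma> s \<in> A" "\<And>s. s \<in> C \<Longrightarrow> 0 < d s (\<sigma> s)"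
    by metis
  define P where "P = P_det S p \<sigma>"
  have P: "P \<in> carrier_mat (S+1) (S+1)"
    by (simp add: P_def P_det_def)
  have stays: "\<forall>s\<in>C. \<forall>k<S+1. k \<notin> C \<longrightarrow> P $$ (s,k) = 0"
    using closed_class_Bmat_no_exit[OF mdp dr C] \<sigma> C_sub by (auto simp: P_def P_det_def)
  have rows: "\<forall>s\<in>C. (\<Sum>j\<in>C. P $$ (s,j)) = 1"
  proof
    fix s assume "s \<in> C"
    then have "s \<le> S"
      using C_sub by auto
    have "(\<Sum>j\<in>C. P $$ (s,j)) = (\<Sum>j\<le>S. P $$ (s,j))"
      using stays \<open>s \<in> C\<close> C_sub by (intro sum.mono_neutral_left) auto
    also have "\<dots> = (\<Sum>j\<le>S. p s (\<sigma> s) j)"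
      using \<open>s \<le> S\<close> by (simp add: P_def P_det_def)
    also have "\<dots> = 1"
      using mdp \<sigma>(1) \<open>s \<le> S\<close> by (simp add: mdp_def)
    finally show "(\<Sum>j\<in>C. P $$ (s,j)) = 1" .
  qed
  obtain s where "s \<in> C"
    using \<open>C \<noteq> {}\<close> by blast
  have "(\<lambda>t. \<Sum>j\<in>C. (P ^\<^sub>m t) $$ (s,j)) \<longlonglongrightarrow> 0"
  proof (rule tendsto_null_sum)
    fix j assume "j \<in> C"
    with \<open>s \<in> C\<close> C_sub transient \<sigma>(1) have "summable (\<lambda>t. (P ^\<^sub>m t) $$ (s,j))"
      unfolding transient_def P_def by blast
    then show "(\<lambda>t. (P ^\<^sub>m t) $$ (s,j)) \<longlonglongrightarrow> 0"
      by (rule summable_LIMSEQ_zero)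
  qed
  moreover have "(\<Sum>j\<in>C. (P ^\<^sub>m t) $$ (s,j)) = 1" for t
    using C_sub by (intro pow_mat_row_sum_closed[OF P _ stays rows \<open>s \<in> C\<close>]) auto
  ultimately show False
    using LIMSEQ_const_iff[of "1::real" 0] by simp
qed

theorem lemma2:
  fixes S :: nat and A :: "'a set" and p r :: "nat \<Rightarrow> 'a \<Rightarrow> nat \<Rightarrow> real"
    and \<beta> :: real and d :: "nat \<Rightarrow> 'a \<Rightarrow> real" and z :: "real vec"
  assumes "0 < S"
    and "0 < \<beta>"
    and "mdp S A p r"
    and "transient S A p"
    and "decision_rule S A d"
    and "z \<in> carrier_vec S" and "\<forall>i<S. 0 \<le> z $ i"
    and "\<forall>i<S. \<bar>winf S A p r \<beta> d z i\<bar> \<noteq> \<infinity>"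
  shows "spectral_radius (map_mat complex_of_real (Bmat S A p r \<beta> d)) < 1"
proof (rule ccontr)
  define B where "B = Bmat S A p r \<beta> d"
  define b where "b = bvec S A p r \<beta> d"
  assume "\<not> ?thesis"
  then have radius: "1 \<le> spectral_radius (map_mat complex_of_real B)"
    by (simp add: B_def)
  have B: "B \<in> carrier_mat S S" and b: "b \<in> carrier_vec S"
    by (simp_all add: B_def Bmat_def b_def bvec_def)
  have B_nonneg: "\<forall>i<S. \<forall>j<S. 0 \<le> B $$ (i,j)" and b_nonneg: "\<forall>i<S. 0 \<le> b $ i"
    using Bmat_nonneg[OF assms(3,5)] bvec_nonneg[OF assms(3,5)] by (simp_all add: B_def b_def)
  have summable: "\<forall>i<S. summable (\<lambda>k. (B ^\<^sub>m k *\<^sub>v b) $ i)"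
    using summable_Bmat_series[OF assms(3,5,6,7)] assms(8) by (auto simp: B_def b_def)
  define g where "g i = (\<Sum>k. (B ^\<^sub>m k *\<^sub>v b) $ i)" for i
  have g_nonneg: "\<forall>i<S. 0 \<le> g i"
    unfolding g_def using summable pow_mat_mult_vec_nonneg[OF B B_nonneg b b_nonneg]
    by (blast intro: suminf_nonneg)
  have g_fixpoint: "\<forall>i<S. g i = b $ i + (\<Sum>j<S. B $$ (i,j) * g j)"
    unfolding g_def using pow_mat_series_fixpoint[OF B b summable] by blast
  obtain y j\<^sub>0 where "j\<^sub>0 < S" "0 < y j\<^sub>0"
    "\<forall>i<S. y i \<le> (\<Sum>j<S. B $$ (i,j) * y j)"
    using subinvariant_vector_if_spectral_radius_ge_1[OF B \<open>0 < S\<close> B_nonneg radius] .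
  then obtain C where "closed_class S B b C"
    using closed_class_exists[OF B_nonneg b_nonneg g_nonneg g_fixpoint] by blast
  with transient_no_closed_class[OF assms(3,4,5)] show False
    by (simp add: B_def b_def)
qed

end
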